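(* Let $V$ be a finite-dimensional vector space over $k$ with basis $v_1,\dots,v_n$ and dual basis $v_1^*,\dots,v_n^*$, let $M$ be a vector space, let $\mu:\mathfrak{gl}(V)\to\mathrm{End}(M)$ be linear, and let $a:V\otimes M\to V\otimes M$ be the corresponding linear map $a(v\otimes x)=\sum_{j=1}^n v_j\otimes\mu(v\otimes v_j^* )(x)$. Define endomorphisms of $V\otimes V\otimes M$ by $\tau(v\otimes w\otimes x)=w\otimes v\otimes x$, $a_2=\mathrm{id}_V\otimes a$, and $a_1=\tau a_2\tau$. Then $\mu([X,Y])=[\mu(X),\mu(Y)]$ for all $X,Y\in\mathfrak{gl}(V)$ if and only if $$a_1a_2-a_2a_1=\tau(a_1-a_2).$$
   Context: $\mathfrak{gl}(V)$ is identified with $V\otimes V^*$ via $v\otimes f\mapsto(w\mapsto f(w)v)$; the map $\mu\mapsto a$ above is the resulting bijection between linear maps $\mathfrak{gl}(V)\to\mathrm{End}(M)$ and linear maps $V\otimes M\to V\otimes M$ (independent of the basis). Brackets are commutators. *)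

theory Defs
  imports "HOL-Analysis.Analysis"
begin

text \<open>V = k^n with its standard basis e_1..e_n (index type 'n).
  gl(V) is represented by n x n matrices over k. Tensor products with the
  basis of V are represented by coordinates:
  V (x) M  ~  'n => 'm   (sum_i e_i (x) x_i  corresponds to  \<lambda>i. x_i),
  V (x) V (x) M  ~  'n => 'n => 'm  (sum_{i,l} e_i (x) e_l (x) x_il corresponds to \<lambda>i l. x_il).\<close>

definition vtens :: "('k \<Rightarrow> 'm \<Rightarrow> 'm) \<Rightarrow> 'k^'n \<Rightarrow> 'm \<Rightarrow> ('n \<Rightarrow> 'm)" where
  "vtens sc v x = (\<lambda>i. sc (v $ i) x)"

text \<open>The element v (x) f of gl(V) = V (x) V^*, i.e. the map w \<mapsto> f(w) v,
  for f = e_j^* the j-th dual basis vector, as a matrix.\<close>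
definition rank1_dual :: "'k::field^'n \<Rightarrow> 'n \<Rightarrow> 'k^'n^'n" where
  "rank1_dual v j = (\<chi> i l. if l = j then v $ i else 0)"

definition mat_scale :: "'k::field \<Rightarrow> 'k^'n^'n \<Rightarrow> 'k^'n^'n" where
  "mat_scale c X = (\<chi> i l. c * X $ i $ l)"

definition gl_bracket :: "'k::field^'n^'n \<Rightarrow> 'k^'n^'n \<Rightarrow> 'k^'n^'n" where
  "gl_bracket X Y = X ** Y - Y ** X"

definition gl_rep_linear ::
  "('k::field \<Rightarrow> 'm::ab_group_add \<Rightarrow> 'm) \<Rightarrow> ('k^'n^'n \<Rightarrow> 'm \<Rightarrow> 'm) \<Rightarrow> bool" where
  "gl_rep_linear sc \<mu> \<longleftrightarrow>
     (\<forall>X. Vector_Spaces.linear sc sc (\<mu> X)) \<and>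
     (\<forall>X Y x. \<mu> (X + Y) x = \<mu> X x + \<mu> Y x) \<and>
     (\<forall>c X x. \<mu> (mat_scale c X) x = sc c (\<mu> X x))"

definition VM_linear ::
  "('k \<Rightarrow> 'm::ab_group_add \<Rightarrow> 'm) \<Rightarrow> (('n \<Rightarrow> 'm) \<Rightarrow> ('n \<Rightarrow> 'm)) \<Rightarrow> bool" where
  "VM_linear sc a \<longleftrightarrow>
     (\<forall>\<xi> \<eta>. a (\<lambda>i. \<xi> i + \<eta> i) = (\<lambda>j. a \<xi> j + a \<eta> j)) \<and>
     (\<forall>c \<xi>. a (\<lambda>i. sc c (\<xi> i)) = (\<lambda>j. sc c (a \<xi> j)))"

definition tau :: "('n \<Rightarrow> 'n \<Rightarrow> 'm) \<Rightarrow> ('n \<Rightarrow> 'n \<Rightarrow> 'm)" where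
  "tau \<zeta> = (\<lambda>i l. \<zeta> l i)"

definition a2 :: "(('n \<Rightarrow> 'm) \<Rightarrow> ('n \<Rightarrow> 'm)) \<Rightarrow> ('n \<Rightarrow> 'n \<Rightarrow> 'm) \<Rightarrow> ('n \<Rightarrow> 'n \<Rightarrow> 'm)" where
  "a2 a \<zeta> = (\<lambda>i. a (\<zeta> i))"

definition a1 :: "(('n \<Rightarrow> 'm) \<Rightarrow> ('n \<Rightarrow> 'm)) \<Rightarrow> ('n \<Rightarrow> 'n \<Rightarrow> 'm) \<Rightarrow> ('n \<Rightarrow> 'n \<Rightarrow> 'm)" where
  "a1 a \<zeta> = tau (a2 a (tau \<zeta>))"

end

theory Submission
  imports Defs
begin

text \<open>Expand everything in the matrix units E_pi. In coordinates a(\<xi>)_j = \<Sum>_i \<mu>(E_ij) \<xi>_i,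
  so the (i,l) entry of a1 a2 - a2 a1 at \<zeta> is \<Sum>_{p,q} [\<mu>(E_pi), \<mu>(E_ql)] \<zeta>_pq, while that
  of \<tau>(a1 - a2) is \<Sum>_{p,q} \<mu>([E_pi, E_ql]) \<zeta>_pq. Testing on tensors \<zeta> with a single nonzero
  entry, the identity says exactly that \<mu> preserves brackets of matrix units, which by
  bilinearity is equivalent to \<mu> preserving all brackets.\<close>

lemma sum_if_constant_condition:
  "(\<Sum>x\<in>A. if P then f x else 0) = (if P then sum f A else 0)"
  by simp

definition matrix_unit :: "'n::finite \<Rightarrow> 'n \<Rightarrow> 'k::field^'n^'n" where
  "matrix_unit p i = rank1_dual (axis p 1) i"

lemma matrix_unit_nth: "matrix_unit p i $ r $ s = (if r = p then if s = i then 1 else 0 else 0)"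
  by (simp add: matrix_unit_def rank1_dual_def axis_def)

lemma matrix_eq_sum_matrix_units:
  "X = (\<Sum>p\<in>UNIV. \<Sum>i\<in>UNIV. mat_scale (X $ p $ i) (matrix_unit p i))"
  by (simp add: vec_eq_iff mat_scale_def matrix_unit_nth if_distrib[of "(*) _"]
      sum_if_constant_condition cong: if_cong)

lemma gl_bracket_matrix_unit:
  "gl_bracket (matrix_unit p i) (matrix_unit q l) =
     (if i = q then matrix_unit p l else 0) - (if l = p then matrix_unit q i else 0)"
  by (simp add: vec_eq_iff gl_bracket_def matrix_matrix_mult_def matrix_unit_nth
      if_distrib[of "(*) _"] sum_if_constant_condition cong: if_cong)

lemma gl_bracket_eq_sum_matrix_units:
  "gl_bracket X Y = (\<Sum>p\<in>UNIV. \<Sum>i\<in>UNIV. \<Sum>q\<in>UNIV. \<Sum>l\<in>UNIV.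
     mat_scale (X $ p $ i * Y $ q $ l) (gl_bracket (matrix_unit p i) (matrix_unit q l)))"
  by (simp add: vec_eq_iff mat_scale_def matrix_unit_nth
      gl_bracket_def matrix_matrix_mult_def if_distrib[of "(*) _"] sum_if_constant_condition
      sum_subtractf right_diff_distrib cong: if_cong)
    (simp add: mult.commute)

lemma sum_sum_single_entry:
  fixes F :: "'a::finite \<Rightarrow> 'b::finite \<Rightarrow> 'c::zero \<Rightarrow> 'd::comm_monoid_add"
  assumes "\<And>p q. F p q 0 = 0"
  shows "(\<Sum>p'\<in>UNIV. \<Sum>q'\<in>UNIV. F p' q' (if p' = p then if q' = q then y else 0 else 0)) = F p q y"
proof -
  have "F p' q' (if p' = p then if q' = q then y else 0 else 0)
      = (if p' = p then if q' = q then F p q y else 0 else 0)" for p' q'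
    using assms by simp
  then show ?thesis
    by (simp add: sum_if_constant_condition)
qed

lemma sum_sum_apply_eq_iff:
  fixes F G :: "'a::finite \<Rightarrow> 'b::finite \<Rightarrow> 'c::zero \<Rightarrow> 'd::comm_monoid_add"
  assumes "\<And>p q. F p q 0 = 0" and "\<And>p q. G p q 0 = 0"
  shows "(\<forall>\<zeta>. (\<Sum>p\<in>UNIV. \<Sum>q\<in>UNIV. F p q (\<zeta> p q)) = (\<Sum>p\<in>UNIV. \<Sum>q\<in>UNIV. G p q (\<zeta> p q)))
    \<longleftrightarrow> F = G"
proof
  assume sums_eq: "\<forall>\<zeta>. (\<Sum>p\<in>UNIV. \<Sum>q\<in>UNIV. F p q (\<zeta> p q))
    = (\<Sum>p\<in>UNIV. \<Sum>q\<in>UNIV. G p q (\<zeta> p q))"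
  show "F = G"
  proof (intro ext)
    fix p q y
    from sums_eq[rule_format, of "\<lambda>p' q'. if p' = p then if q' = q then y else 0 else 0"]
    show "F p q y = G p q y"
      by (simp only: sum_sum_single_entry assms)
  qed
qed simp

locale gl_representation = vector_space sc for sc :: "'k::field \<Rightarrow> 'm::ab_group_add \<Rightarrow> 'm" +
  fixes \<mu> :: "'k^'n::finite^'n \<Rightarrow> 'm \<Rightarrow> 'm"
  assumes gl_rep_linear: "gl_rep_linear sc \<mu>"
begin

lemma module_hom_rep: "module_hom sc sc (\<mu> X)"
  using gl_rep_linear by (simp add: gl_rep_linear_def module_hom_iff_linear)

lemmas rep_apply_sum = module_hom.sum[OF module_hom_rep]
  and rep_apply_scale = module_hom.scale[OF module_hom_rep]
  and rep_apply_zero [simp] = module_hom.zero[OF module_hom_rep]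

lemma rep_add: "\<mu> (X + Y) x = \<mu> X x + \<mu> Y x"
  using gl_rep_linear by (simp add: gl_rep_linear_def)

lemma rep_mat_scale: "\<mu> (mat_scale c X) x = sc c (\<mu> X x)"
  using gl_rep_linear by (simp add: gl_rep_linear_def)

lemma rep_zero [simp]: "\<mu> 0 x = 0"
  using rep_add[of 0 0 x] by simp

lemma rep_diff: "\<mu> (X - Y) x = \<mu> X x - \<mu> Y x"
  using rep_add[of "X - Y" Y x] by (simp add: algebra_simps)

lemma rep_sum: "\<mu> (sum f S) x = (\<Sum>k\<in>S. \<mu> (f k) x)"
  by (induction S rule: infinite_finite_induct) (simp_all add: rep_add)

lemma rep_gl_bracket_matrix_unit:
  "\<mu> (gl_bracket (matrix_unit p i) (matrix_unit q l)) y =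
     (if i = q then \<mu> (matrix_unit p l) y else 0) - (if l = p then \<mu> (matrix_unit q i) y else 0)"
  by (simp add: gl_bracket_matrix_unit rep_diff)

lemma rep_eq_sum_matrix_units:
  "\<mu> X x = (\<Sum>p\<in>UNIV. \<Sum>i\<in>UNIV. sc (X $ p $ i) (\<mu> (matrix_unit p i) x))"
  by (subst matrix_eq_sum_matrix_units) (simp add: rep_sum rep_mat_scale)

lemma rep_bracket_eq_sum_matrix_units:
  "\<mu> (gl_bracket X Y) y = (\<Sum>p\<in>UNIV. \<Sum>i\<in>UNIV. \<Sum>q\<in>UNIV. \<Sum>l\<in>UNIV.
     sc (X $ p $ i * Y $ q $ l) (\<mu> (gl_bracket (matrix_unit p i) (matrix_unit q l)) y))"
  by (subst gl_bracket_eq_sum_matrix_units) (simp add: rep_sum rep_mat_scale)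

lemma rep_commutator_eq_sum_matrix_units:
  "\<mu> X (\<mu> Y y) - \<mu> Y (\<mu> X y) = (\<Sum>p\<in>UNIV. \<Sum>i\<in>UNIV. \<Sum>q\<in>UNIV. \<Sum>l\<in>UNIV.
     sc (X $ p $ i * Y $ q $ l) (\<mu> (matrix_unit p i) (\<mu> (matrix_unit q l) y)
                                 - \<mu> (matrix_unit q l) (\<mu> (matrix_unit p i) y)))"
proof -
  have XY: "\<mu> X (\<mu> Y y) = (\<Sum>p\<in>UNIV. \<Sum>i\<in>UNIV. \<Sum>q\<in>UNIV. \<Sum>l\<in>UNIV.
     sc (X $ p $ i * Y $ q $ l) (\<mu> (matrix_unit p i) (\<mu> (matrix_unit q l) y)))"
  proof -
    have "\<mu> X (\<mu> Y y) = (\<Sum>p\<in>UNIV. \<Sum>i\<in>UNIV. sc (X $ p $ i) (\<mu> (matrix_unit p i) (\<mu> Y y)))"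
      by (rule rep_eq_sum_matrix_units)
    then show ?thesis
      by (simp add: rep_eq_sum_matrix_units[of Y] rep_apply_sum rep_apply_scale scale_sum_right)
  qed
  have YX: "\<mu> Y (\<mu> X y) = (\<Sum>p\<in>UNIV. \<Sum>i\<in>UNIV. \<Sum>q\<in>UNIV. \<Sum>l\<in>UNIV.
     sc (X $ p $ i * Y $ q $ l) (\<mu> (matrix_unit q l) (\<mu> (matrix_unit p i) y)))"
  proof -
    have "\<mu> Y (\<mu> X y) = (\<Sum>p\<in>UNIV. \<Sum>i\<in>UNIV. sc (X $ p $ i) (\<mu> Y (\<mu> (matrix_unit p i) y)))"
      by (subst rep_eq_sum_matrix_units[of X]) (simp add: rep_apply_sum rep_apply_scale)
    then show ?thesis
      by (simp add: rep_eq_sum_matrix_units[of Y] scale_sum_right)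
  qed
  show ?thesis
    unfolding XY YX by (simp only: sum_subtractf scale_right_diff_distrib)
qed

lemma rep_bracket_iff_on_matrix_units:
  "(\<forall>X Y. \<mu> (gl_bracket X Y) = (\<lambda>x. \<mu> X (\<mu> Y x) - \<mu> Y (\<mu> X x))) \<longleftrightarrow>
   (\<forall>p i q l y.
      \<mu> (matrix_unit p i) (\<mu> (matrix_unit q l) y) - \<mu> (matrix_unit q l) (\<mu> (matrix_unit p i) y)
      = \<mu> (gl_bracket (matrix_unit p i) (matrix_unit q l)) y)"
  (is "?hom \<longleftrightarrow> ?units")
proof
  assume ?hom
  then show ?units by simp
next
  assume units: ?units
  show ?hom
  proof (intro allI ext)
    fix X Y y
    have "\<mu> (gl_bracket X Y) y = (\<Sum>p\<in>UNIV. \<Sum>i\<in>UNIV. \<Sum>q\<in>UNIV. \<Sum>l\<in>UNIV.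
        sc (X $ p $ i * Y $ q $ l) (\<mu> (gl_bracket (matrix_unit p i) (matrix_unit q l)) y))"
      by (rule rep_bracket_eq_sum_matrix_units)
    also have "\<dots> = (\<Sum>p\<in>UNIV. \<Sum>i\<in>UNIV. \<Sum>q\<in>UNIV. \<Sum>l\<in>UNIV.
        sc (X $ p $ i * Y $ q $ l) (\<mu> (matrix_unit p i) (\<mu> (matrix_unit q l) y)
                                    - \<mu> (matrix_unit q l) (\<mu> (matrix_unit p i) y)))"
      using units by simp
    also have "\<dots> = \<mu> X (\<mu> Y y) - \<mu> Y (\<mu> X y)"
      by (rule rep_commutator_eq_sum_matrix_units[symmetric])
    finally show "\<mu> (gl_bracket X Y) y = \<mu> X (\<mu> Y y) - \<mu> Y (\<mu> X y)" .
  qed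
qed

end

locale gl_tensor_action = gl_representation sc \<mu>
  for sc :: "'k::field \<Rightarrow> 'm::ab_group_add \<Rightarrow> 'm" and \<mu> :: "'k^'n::finite^'n \<Rightarrow> 'm \<Rightarrow> 'm" +
  fixes a :: "('n \<Rightarrow> 'm) \<Rightarrow> ('n \<Rightarrow> 'm)"
  assumes VM_linear: "VM_linear sc a"
    and action_vtens: "\<forall>v x. a (vtens sc v x) = (\<lambda>j. \<mu> (rank1_dual v j) x)"
begin

lemma action_add: "a (\<lambda>i. \<xi> i + \<eta> i) = (\<lambda>j. a \<xi> j + a \<eta> j)"
  using VM_linear by (simp add: VM_linear_def)

lemma action_zero: "a (\<lambda>i. 0) = (\<lambda>j. 0)"
proof -
  have "a (\<lambda>i. sc 0 (\<xi> i)) = (\<lambda>j. sc 0 (a \<xi> j))" for \<xi>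
    using VM_linear unfolding VM_linear_def by blast
  from this[of "\<lambda>i. 0"] show ?thesis
    by simp
qed

lemma action_sum: "a (\<lambda>i. \<Sum>k\<in>S. \<xi> k i) = (\<lambda>j. \<Sum>k\<in>S. a (\<xi> k) j)"
  by (induction S rule: infinite_finite_induct) (simp_all add: action_zero action_add)

lemma action_apply: "a \<xi> j = (\<Sum>i\<in>UNIV. \<mu> (matrix_unit i j) (\<xi> i))"
proof -
  have "\<xi> = (\<lambda>k. \<Sum>i\<in>UNIV. vtens sc (axis i 1) (\<xi> i) k)"
    by (simp add: fun_eq_iff vtens_def axis_def if_distrib[of "\<lambda>c. sc c _"] cong: if_cong)
  then have "a \<xi> = (\<lambda>j. \<Sum>i\<in>UNIV. a (vtens sc (axis i 1) (\<xi> i)) j)"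
    by (metis action_sum)
  then show ?thesis
    using action_vtens by (simp add: matrix_unit_def)
qed

lemma a2_apply: "a2 a \<zeta> i l = (\<Sum>p\<in>UNIV. \<mu> (matrix_unit p l) (\<zeta> i p))"
  by (simp add: a2_def action_apply)

lemma a1_apply: "a1 a \<zeta> i l = (\<Sum>p\<in>UNIV. \<mu> (matrix_unit p i) (\<zeta> p l))"
  by (simp add: a1_def a2_def tau_def action_apply)

lemma a1_a2_commutator_apply:
  "a1 a (a2 a \<zeta>) i l - a2 a (a1 a \<zeta>) i l = (\<Sum>p\<in>UNIV. \<Sum>q\<in>UNIV.
     \<mu> (matrix_unit p i) (\<mu> (matrix_unit q l) (\<zeta> p q))
     - \<mu> (matrix_unit q l) (\<mu> (matrix_unit p i) (\<zeta> p q)))"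
proof -
  have "a2 a (a1 a \<zeta>) i l
      = (\<Sum>p\<in>UNIV. \<Sum>q\<in>UNIV. \<mu> (matrix_unit q l) (\<mu> (matrix_unit p i) (\<zeta> p q)))"
    by (simp add: a1_apply a2_apply rep_apply_sum) (rule sum.swap)
  then show ?thesis
    by (simp add: a1_apply a2_apply rep_apply_sum sum_subtractf)
qed

lemma tau_a1_minus_a2_apply:
  "tau (\<lambda>i l. a1 a \<zeta> i l - a2 a \<zeta> i l) i l
     = (\<Sum>p\<in>UNIV. \<Sum>q\<in>UNIV. \<mu> (gl_bracket (matrix_unit p i) (matrix_unit q l)) (\<zeta> p q))"
  by (simp add: tau_def a1_apply a2_apply rep_gl_bracket_matrix_unit sum_subtractf
      sum_if_constant_condition)

theorem rep_bracket_iff_commutator_identity: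
  "(\<forall>X Y. \<mu> (gl_bracket X Y) = (\<lambda>x. \<mu> X (\<mu> Y x) - \<mu> Y (\<mu> X x))) \<longleftrightarrow>
   (\<forall>\<zeta>. (\<lambda>i l. a1 a (a2 a \<zeta>) i l - a2 a (a1 a \<zeta>) i l)
      = tau (\<lambda>i l. a1 a \<zeta> i l - a2 a \<zeta> i l))"
proof -
  have entry_iff: "(\<forall>\<zeta>. a1 a (a2 a \<zeta>) i l - a2 a (a1 a \<zeta>) i l
                      = tau (\<lambda>i l. a1 a \<zeta> i l - a2 a \<zeta> i l) i l)
    \<longleftrightarrow> (\<forall>p q y.
          \<mu> (matrix_unit p i) (\<mu> (matrix_unit q l) y) - \<mu> (matrix_unit q l) (\<mu> (matrix_unit p i) y)
          = \<mu> (gl_bracket (matrix_unit p i) (matrix_unit q l)) y)" for i l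
    unfolding a1_a2_commutator_apply tau_a1_minus_a2_apply
    using sum_sum_apply_eq_iff[of
        "\<lambda>p q y. \<mu> (matrix_unit p i) (\<mu> (matrix_unit q l) y)
                 - \<mu> (matrix_unit q l) (\<mu> (matrix_unit p i) y)"
        "\<lambda>p q y. \<mu> (gl_bracket (matrix_unit p i) (matrix_unit q l)) y"]
    by (simp add: fun_eq_iff)
  have "(\<forall>\<zeta>. (\<lambda>i l. a1 a (a2 a \<zeta>) i l - a2 a (a1 a \<zeta>) i l)
          = tau (\<lambda>i l. a1 a \<zeta> i l - a2 a \<zeta> i l))
    \<longleftrightarrow> (\<forall>i l. \<forall>\<zeta>. a1 a (a2 a \<zeta>) i l - a2 a (a1 a \<zeta>) i l
                    = tau (\<lambda>i l. a1 a \<zeta> i l - a2 a \<zeta> i l) i l)"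
    unfolding fun_eq_iff by blast
  also have "\<dots> \<longleftrightarrow> (\<forall>X Y. \<mu> (gl_bracket X Y) = (\<lambda>x. \<mu> X (\<mu> Y x) - \<mu> Y (\<mu> X x)))"
    unfolding entry_iff rep_bracket_iff_on_matrix_units by blast
  finally show ?thesis ..
qed

end

theorem proposition4p2:
  fixes sc :: "'k::field \<Rightarrow> 'm::ab_group_add \<Rightarrow> 'm"
    and \<mu> :: "'k^'n::finite^'n \<Rightarrow> 'm \<Rightarrow> 'm"
    and a :: "('n \<Rightarrow> 'm) \<Rightarrow> ('n \<Rightarrow> 'm)"
  assumes M: "vector_space sc"
    and mu_lin: "gl_rep_linear sc \<mu>"
    and a_lin: "VM_linear sc a"
    and a_def: "\<forall>v x. a (vtens sc v x) = (\<lambda>j. \<mu> (rank1_dual v j) x)"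
  shows "(\<forall>X Y. \<mu> (gl_bracket X Y) = (\<lambda>x. \<mu> X (\<mu> Y x) - \<mu> Y (\<mu> X x)))
     \<longleftrightarrow> (\<forall>\<zeta>. (\<lambda>i l. a1 a (a2 a \<zeta>) i l - a2 a (a1 a \<zeta>) i l)
               = tau (\<lambda>i l. a1 a \<zeta> i l - a2 a \<zeta> i l))"
proof -
  interpret gl_tensor_action sc \<mu> a
    using M mu_lin a_lin a_def
    by (simp add: gl_tensor_action_def gl_tensor_action_axioms_def
        gl_representation_def gl_representation_axioms_def)
  show ?thesis
    by (rule rep_bracket_iff_commutator_identity)
qed

end
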